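(* Assume Assumptions 1, 2, 3 (stated in the context). For any fixed $\epsilon_5>0$, if Line-Search (Algorithm 3, described in the context), called with input point $\theta$, makes infinitely many calls to subdivision, then either $\hat{\mathcal{P}}(\epsilon_5)$ (evaluated at $\theta$) is unbounded or $\theta$ is unsafe.
   Context: Problem: for $\theta$ and $t\in[0,T]$, body $i$ occupies $b_i(t,\theta)\subset\mathbb{R}^3$, obstacles occupy $o$; $\text{dist}$ is the shortest Euclidean distance between sets; $d_0\ge0$; $\mathcal{O}(\theta)$ twice differentiable cost. Assumption 1: finite decompositions $b_i=\bigcup_j b_{ij}$, $o=\bigcup_k o_k$ with each $(t,\theta)\mapsto\text{dist}(b_{ij}(t,\theta),o_k)$ sufficiently smooth. Assumption 2: the feasible domain of $t,\theta$ is bounded. Assumption 3: $\mathcal{P}$ sufficiently smooth, monotonically decreasing on $(0,\infty)$, $\lim_{x\to0}\mathcal{P}=\infty$, $\lim_{x\to\infty}\mathcal{P}=0$, $\lim_{x\to0}x\mathcal{P}(x)=\infty$. $L_1$: a constant with $|\text{dist}(b_{ij}(t_1,\theta),o_k)-\text{dist}(b_{ij}(t_2,\theta),o_k)|\le L_1|t_1-t_2|$ for all arguments. $\mathcal{P}_{ijk}(t,\theta)=\mathcal{P}(\text{dist}(b_{ij}(t,\theta),o_k)-d_0)$; per triple a finite partition of $[0,T]$ into intervals $[T_0^l,T_1^l]$; subdividing $(i,j,k,l)$ replaces the interval by its two halves; $\mathcal{P}_{ijkl}(\theta)=\mathcal{P}_{ijk}((T_0^l+T_1^l)/2,\theta)$;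 $\mathcal{E}=\mathcal{O}+\mu\sum_{ijkl}(T_1^l-T_0^l)\mathcal{P}_{ijkl}$, $\mu>0$. The hybrid penalty $\hat{\mathcal{P}}(\epsilon_5)$ is $\sum_{ijkl}$ of $(T_1^l-T_0^l)\mathcal{P}_{ijkl}$ over intervals with $T_1^l-T_0^l\ge\epsilon_5$ and of $\int_{T_0^l}^{T_1^l}\mathcal{P}_{ijk}(t,\theta)dt$ over intervals with $T_1^l-T_0^l<\epsilon_5$. Directions $d^{(1)}=-\nabla_\theta\mathcal{E}$ or $d^{(2)}=\mathcal{M}(\nabla^2_\theta\mathcal{E})^{-1}d^{(1)}$ with $\underline\beta I\preceq\mathcal{M}(H)\preceq\bar\beta I$. Wolfe: $\mathcal{E}(\theta+d\alpha)\le\mathcal{E}(\theta)+c\langle d\alpha,\nabla\mathcal{E}\rangle$, $c\in(0,1)$. Safety check at $\theta$: $\psi(x)=L_1x/2+L_2x^\eta$ ($L_2,\eta>0$); return a tuple $(i,j,k,l)$ with $\text{dist}(b_{ij}((T_0^l+T_1^l)/2,\theta),o_k)\le d_0+\psi(T_1^l-T_0^l)$ if one exists, else None ($\theta$ safe; otherwise unsafe). Line-Search$(\theta,d,\epsilon_\alpha)$ ($\alpha_0>0,\gamma\in(0,1)$): $\alpha=\alpha_0$; while $\theta+d\alpha$ fails the safety check or Wolfe: if the check returned $(i,j,k,l)$, then if $\alpha\le\epsilon_\alpha$: $\epsilon_\alpha\leftarrow\gamma\epsilon_\alpha$, subdivide $(i,j,k,l)$, re-evaluate $\mathcal{E}$,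 recompute $d$; else $\alpha\leftarrow\gamma\alpha$; if only Wolfe fails, $\alpha\leftarrow\gamma\alpha$. Return $\alpha,\epsilon_\alpha$. *)

theory Defs
  imports "HOL-Analysis.Analysis" "HOL-Library.Infinite_Set"
begin

definition twice_diff :: "('a::real_normed_vector \<Rightarrow> real) \<Rightarrow> bool" where
  "twice_diff f \<longleftrightarrow> (\<exists>f' f''.
     (\<forall>x. (f has_derivative blinfun_apply (f' x)) (at x)) \<and>
     (\<forall>x. (f' has_derivative blinfun_apply (f'' x)) (at x)))"

definition C2 :: "('a::real_normed_vector \<Rightarrow> real) \<Rightarrow> bool" where
  "C2 f \<longleftrightarrow> (\<exists>f' f''.
     (\<forall>x. (f has_derivative blinfun_apply (f' x)) (at x)) \<and>
     (\<forall>x. (f' has_derivative blinfun_apply (f'' x)) (at x)) \<and>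
     continuous_on UNIV f'')"

definition C2_pos :: "(real \<Rightarrow> real) \<Rightarrow> bool" where
  "C2_pos P \<longleftrightarrow> (\<exists>P' P''.
     (\<forall>x>0. (P has_real_derivative P' x) (at x)) \<and>
     (\<forall>x>0. (P' has_real_derivative P'' x) (at x)) \<and>
     continuous_on {0<..} P'')"

definition grad :: "(real^'n::finite \<Rightarrow> real) \<Rightarrow> real^'n \<Rightarrow> real^'n" where
  "grad f x = (SOME g. GDERIV f x :> g)"

definition hess :: "(real^'n::finite \<Rightarrow> real) \<Rightarrow> real^'n \<Rightarrow> real^'n^'n" where
  "hess f x = (SOME H. (grad f has_derivative (\<lambda>h. H *v h)) (at x))"

definition is_partition :: "real \<Rightarrow> (real \<times> real) set \<Rightarrow> bool" where
  "is_partition T S \<longleftrightarrow> finite S \<and> (\<forall>(a,b)\<in>S. a < b) \<and>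
     (\<Union>(a,b)\<in>S. {a..b}) = {0..T} \<and>
     (\<forall>(a,b)\<in>S. \<forall>(a',b')\<in>S. (a,b) \<noteq> (a',b') \<longrightarrow> {a<..<b} \<inter> {a'<..<b'} = {})"

(* A partition state assigns to every triple c = ((i,j),k) a set of intervals *)
type_synonym 'c partn = "'c \<Rightarrow> (real \<times> real) set"

definition energy ::
  "(real^'n::finite \<Rightarrow> real) \<Rightarrow> real \<Rightarrow> (real \<Rightarrow> real) \<Rightarrow> ('c::finite \<Rightarrow> real \<Rightarrow> real^'n \<Rightarrow> real)
   \<Rightarrow> real \<Rightarrow> 'c partn \<Rightarrow> real^'n \<Rightarrow> real" where
  "energy Obj mu P D d0 prt x = Obj x + mu * (\<Sum>c\<in>UNIV. \<Sum>(a,b)\<in>prt c. (b - a) * P (D c ((a + b) / 2) x - d0))"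

definition hybrid_pen ::
  "real \<Rightarrow> (real \<Rightarrow> real) \<Rightarrow> ('c::finite \<Rightarrow> real \<Rightarrow> 'p \<Rightarrow> real) \<Rightarrow> real \<Rightarrow> 'c partn \<Rightarrow> 'p \<Rightarrow> real" where
  "hybrid_pen eps5 P D d0 prt x = (\<Sum>c\<in>UNIV. \<Sum>(a,b)\<in>prt c.
      if eps5 \<le> b - a then (b - a) * P (D c ((a + b) / 2) x - d0)
      else integral {a..b} (\<lambda>t. P (D c t x - d0)))"

(* the safety check can return tuple (c,(a,b)) at x *)
definition unsafe_tuple ::
  "(real \<Rightarrow> real) \<Rightarrow> ('c \<Rightarrow> real \<Rightarrow> 'p \<Rightarrow> real) \<Rightarrow> real \<Rightarrow> 'c partn \<Rightarrow> 'p \<Rightarrow> 'c \<Rightarrow> real \<times> real \<Rightarrow> bool" where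
  "unsafe_tuple psi D d0 prt x c ab \<longleftrightarrow> ab \<in> prt c \<and>
     D c ((fst ab + snd ab) / 2) x \<le> d0 + psi (snd ab - fst ab)"

definition unsafe ::
  "(real \<Rightarrow> real) \<Rightarrow> ('c \<Rightarrow> real \<Rightarrow> 'p \<Rightarrow> real) \<Rightarrow> real \<Rightarrow> 'c partn \<Rightarrow> 'p \<Rightarrow> bool" where
  "unsafe psi D d0 prt x \<longleftrightarrow> (\<exists>c ab. unsafe_tuple psi D d0 prt x c ab)"

definition subdivide :: "'c partn \<Rightarrow> 'c \<Rightarrow> real \<times> real \<Rightarrow> 'c partn" where
  "subdivide prt c ab = prt(c := (prt c - {ab}) \<union>
      {(fst ab, (fst ab + snd ab) / 2), ((fst ab + snd ab) / 2, snd ab)})"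

definition wolfe :: "(real^'n::finite \<Rightarrow> real) \<Rightarrow> real \<Rightarrow> real^'n \<Rightarrow> real^'n \<Rightarrow> real \<Rightarrow> bool" where
  "wolfe E cW x d \<alpha> \<longleftrightarrow> E (x + \<alpha> *\<^sub>R d) \<le> E x + cW * ((\<alpha> *\<^sub>R d) \<bullet> grad E x)"

definition direction :: "bool \<Rightarrow> (real^'n^'n \<Rightarrow> real^'n^'n) \<Rightarrow> (real^'n::finite \<Rightarrow> real) \<Rightarrow> real^'n \<Rightarrow> real^'n" where
  "direction newton M E x =
     (if newton then matrix_inv (M (hess E x)) *v (- grad E x) else - grad E x)"

(* One iteration of the while loop of Line-Search(x, d, eps_alpha).
   State: (partition, alpha, eps_alpha, d).  The flag sub records whether this
   iteration called subdivision. *)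
definition ls_step ::
  "(real^'n::finite \<Rightarrow> real) \<Rightarrow> real \<Rightarrow> (real \<Rightarrow> real) \<Rightarrow> ('c::finite \<Rightarrow> real \<Rightarrow> real^'n \<Rightarrow> real) \<Rightarrow> real
   \<Rightarrow> (real \<Rightarrow> real) \<Rightarrow> real \<Rightarrow> real \<Rightarrow> bool \<Rightarrow> (real^'n^'n \<Rightarrow> real^'n^'n) \<Rightarrow> real^'n
   \<Rightarrow> 'c partn \<times> real \<times> real \<times> (real^'n) \<Rightarrow> bool \<Rightarrow> 'c partn \<times> real \<times> real \<times> (real^'n) \<Rightarrow> bool" where
  "ls_step Obj mu P D d0 psi \<gamma> cW newton M x st sub st' \<longleftrightarrow>
    (let prt = fst st; \<alpha> = fst (snd st); e\<alpha> = fst (snd (snd st)); d = snd (snd (snd st));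
         prt' = fst st'; \<alpha>' = fst (snd st'); e\<alpha>' = fst (snd (snd st')); d' = snd (snd (snd st'))
     in (\<exists>c ab. unsafe_tuple psi D d0 prt (x + \<alpha> *\<^sub>R d) c ab \<and>
         (if \<alpha> \<le> e\<alpha> then
            sub \<and> prt' = subdivide prt c ab \<and> e\<alpha>' = \<gamma> * e\<alpha> \<and> \<alpha>' = \<alpha> \<and>
            d' = direction newton M (energy Obj mu P D d0 prt') x
          else \<not> sub \<and> prt' = prt \<and> \<alpha>' = \<gamma> * \<alpha> \<and> e\<alpha>' = e\<alpha> \<and> d' = d))
      \<or> (\<not> unsafe psi D d0 prt (x + \<alpha> *\<^sub>R d) \<and>
         \<not> wolfe (energy Obj mu P D d0 prt) cW x d \<alpha> \<and>
         \<not> sub \<and> prt' = prt \<and> \<alpha>' = \<gamma> * \<alpha> \<and> e\<alpha>' = e\<alpha> \<and> d' = d))"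

end

theory Submission
  imports Defs
begin

(* Suppose theta is safe for the initial partition.  Then every interval has a positive safety
   margin D(midpoint) - d0 - psi(length) at theta, and by the Lipschitz bound in t the margin can
   only grow when an interval is halved; so one margin m > 0 serves every partition reachable by
   subdivision, and by uniform continuity of the distances a whole ball around theta is safe for
   all of them.  The margin also keeps every penalty argument in a compact subinterval of
   (0, infinity), so the gradients of the energies, and hence the search directions, are bounded
   uniformly.  A subdivision multiplies eps_alpha by gamma and happens only when alpha <= eps_alpha
   at an unsafe trial point theta + alpha d; with infinitely many subdivisions these trial points
   eventually enter the safe ball, a contradiction. *)

lemma norm_matrix_inv_mult_le:
  fixes A :: "real^'n::finite^'n"
  assumes "\<beta> > 0" and coercive: "\<And>v. \<beta> * (v \<bullet> v) \<le> v \<bullet> (A *v v)"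
  shows "norm (matrix_inv A *v u) \<le> norm u / \<beta>"
proof -
  have "x = 0" if "A *v x = 0" for x
  proof -
    have "x \<bullet> x \<le> 0" using coercive[of x] that \<open>\<beta> > 0\<close> by (simp add: mult_le_0_iff)
    then show ?thesis by (metis inner_eq_zero_iff order_antisym inner_ge_zero)
  qed
  then have "invertible A"
    by (simp add: matrix_left_invertible_ker invertible_left_inverse)
  then have "A ** matrix_inv A = mat 1 \<and> matrix_inv A ** A = mat 1"
    unfolding matrix_inv_def invertible_def by (rule someI_ex)
  then have "A *v (matrix_inv A *v u) = u"
    by (simp add: matrix_vector_mul_assoc)
  define w where "w = matrix_inv A *v u"
  have "\<beta> * (norm w)\<^sup>2 \<le> w \<bullet> u"
    using coercive[of w] \<open>A *v (matrix_inv A *v u) = u\<close> by (simp add: w_def power2_norm_eq_inner)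
  also have "\<dots> \<le> norm w * norm u" by (rule norm_cauchy_schwarz)
  finally have "\<beta> * norm w \<le> norm u"
    by (cases "norm w = 0") (auto simp: power2_eq_square mult.assoc[symmetric])
  then show ?thesis using \<open>\<beta> > 0\<close> by (simp add: w_def pos_le_divide_eq mult.commute)
qed

lemma norm_grad_le:
  fixes f :: "real^'n::finite \<Rightarrow> real"
  assumes f': "(f has_derivative f') (at x)" and bound: "\<And>h. \<bar>f' h\<bar> \<le> K * norm h"
  shows "norm (grad f x) \<le> K"
proof -
  have "linear f'" using f' by (rule has_derivative_linear)
  define g where "g = (\<Sum>b\<in>Basis. f' b *\<^sub>R b)"
  have "f' h = h \<bullet> g" for h
  proof -
    have "f' h = f' (\<Sum>b\<in>Basis. (h \<bullet> b) *\<^sub>R b)" by (simp add: euclidean_representation)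
    also have "\<dots> = h \<bullet> g"
      using \<open>linear f'\<close> by (simp add: g_def linear_sum linear_scale inner_sum_right mult.commute)
    finally show ?thesis .
  qed
  then have "f' = (\<lambda>h. h \<bullet> g)" by blast
  then have "GDERIV f x :> g" using f' by (simp add: gderiv_def)
  then have "GDERIV f x :> grad f x" unfolding grad_def by (rule someI)
  then have "f' = (\<lambda>h. h \<bullet> grad f x)" using f' by (simp add: gderiv_def has_derivative_unique)
  then have "norm (grad f x) * norm (grad f x) \<le> K * norm (grad f x)"
    using bound[of "grad f x"] by (simp add: power2_norm_eq_inner[symmetric] power2_eq_square)
  moreover obtain b :: "real^'n" where "b \<in> Basis" using nonempty_Basis by blast
  then have "0 \<le> K" using bound[of b] abs_ge_zero[of "f' b"] by (simp add: norm_Basis)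
  ultimately show ?thesis
    using mult_right_le_imp_le[of "norm (grad f x)" "norm (grad f x)" K]
    by (cases "norm (grad f x) = 0") auto
qed

lemma bounded_on_interval_finite_family:
  fixes g :: "'c::finite \<Rightarrow> real \<Rightarrow> 'a::real_normed_vector"
  assumes "\<And>c. continuous_on {a..b} (g c)"
  shows "\<exists>B. \<forall>c. \<forall>t\<in>{a..b}. norm (g c t) \<le> B"
proof -
  have "bounded (\<Union>c. g c ` {a..b})"
    using assms by (intro bounded_UN ballI compact_imp_bounded compact_continuous_image) auto
  then show ?thesis by (auto simp: bounded_iff)
qed

lemma uniformly_close_near:
  fixes D :: "'c::finite \<Rightarrow> real \<Rightarrow> 'a::heine_borel \<Rightarrow> real"
  assumes cont: "\<And>c. continuous_on UNIV (\<lambda>(t, y). D c t y)" and "e > 0"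
  shows "\<exists>\<rho>>0. \<forall>c. \<forall>t\<in>{a..b}. \<forall>y. dist y x < \<rho> \<longrightarrow> \<bar>D c t y - D c t x\<bar> < e"
proof -
  have "eventually (\<lambda>y. \<forall>t\<in>{a..b}. \<bar>D c t y - D c t x\<bar> < e) (nhds x)" for c
  proof -
    let ?S = "{a..b} \<times> cball x 1"
    have "continuous_on ?S (\<lambda>(t, y). D c t y)"
      using cont by (rule continuous_on_subset) simp
    then have "uniformly_continuous_on ?S (\<lambda>(t, y). D c t y)"
      by (intro compact_uniformly_continuous compact_Times compact_Icc compact_cball)
    then obtain \<delta> where "\<delta> > 0" and \<delta>: "\<And>z z'. z \<in> ?S \<Longrightarrow> z' \<in> ?S \<Longrightarrow> dist z' z < \<delta> \<Longrightarrow>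
        dist ((\<lambda>(t, y). D c t y) z') ((\<lambda>(t, y). D c t y) z) < e"
      unfolding uniformly_continuous_on_def using \<open>e > 0\<close> by metis
    have "\<bar>D c t y - D c t x\<bar> < e" if "t \<in> {a..b}" "dist y x < min \<delta> 1" for t y
    proof -
      have "(t, x) \<in> ?S" "(t, y) \<in> ?S" "dist (t, y) (t, x) < \<delta>"
        using that by (simp_all add: dist_Pair_Pair dist_commute)
      then show ?thesis using \<delta> by (fastforce simp: dist_real_def)
    qed
    then show ?thesis
      unfolding eventually_nhds_metric using \<open>\<delta> > 0\<close> by (intro exI[of _ "min \<delta> 1"]) simp
  qed
  then have "eventually (\<lambda>y. \<forall>c. \<forall>t\<in>{a..b}. \<bar>D c t y - D c t x\<bar> < e) (nhds x)"
    by (rule eventually_all_finite)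
  then show ?thesis by (auto simp: eventually_nhds_metric)
qed

lemma midpoint_margin_mono:
  fixes f :: "real \<Rightarrow> real"
  assumes lip: "\<And>t1 t2. t1 \<in> {0..T} \<Longrightarrow> t2 \<in> {0..T} \<Longrightarrow> \<bar>f t1 - f t2\<bar> \<le> L1 * \<bar>t1 - t2\<bar>"
    and "L2 \<ge> 0" "\<eta> > 0" "0 \<le> a" "a \<le> a'" "a' < b'" "b' \<le> b" "b \<le> T"
  shows "f ((a + b) / 2) - (L1 * (b - a) / 2 + L2 * (b - a) powr \<eta>)
       \<le> f ((a' + b') / 2) - (L1 * (b' - a') / 2 + L2 * (b' - a') powr \<eta>)"
proof -
  have "0 \<le> L1 * (b' - a')" using lip[of a' b'] assms by (smt (verit) atLeastAtMost_iff)
  then have "L1 \<ge> 0" using assms by (simp add: zero_le_mult_iff)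
  have "\<bar>f ((a' + b') / 2) - f ((a + b) / 2)\<bar> \<le> L1 * \<bar>(a' + b') / 2 - (a + b) / 2\<bar>"
    using lip assms by auto
  also have "\<dots> \<le> L1 * ((b - a) - (b' - a')) / 2"
    using \<open>L1 \<ge> 0\<close> assms by (auto simp: abs_if field_simps intro: mult_left_mono)
  finally have mid: "f ((a + b) / 2) - L1 * ((b - a) - (b' - a')) / 2 \<le> f ((a' + b') / 2)"
    by linarith
  have "(b' - a') powr \<eta> \<le> (b - a) powr \<eta>"
    using assms by (intro powr_mono2) auto
  then have "L2 * (b' - a') powr \<eta> \<le> L2 * (b - a) powr \<eta>"
    using assms by (simp add: mult_left_mono)
  with mid show ?thesis by (simp add: algebra_simps add_divide_distrib diff_divide_distrib)
qed

definition safety_margin ::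
  "(real \<Rightarrow> real) \<Rightarrow> ('c \<Rightarrow> real \<Rightarrow> 'p \<Rightarrow> real) \<Rightarrow> real \<Rightarrow> 'p \<Rightarrow> 'c \<Rightarrow> real \<times> real \<Rightarrow> real" where
  "safety_margin \<psi> D d0 x c ab = D c ((fst ab + snd ab) / 2) x - d0 - \<psi> (snd ab - fst ab)"

lemma unsafe_tuple_iff:
  "unsafe_tuple \<psi> D d0 prt x c ab \<longleftrightarrow> ab \<in> prt c \<and> safety_margin \<psi> D d0 x c ab \<le> 0"
  by (auto simp: unsafe_tuple_def safety_margin_def)

definition is_refinement :: "'c partn \<Rightarrow> 'c partn \<Rightarrow> bool" where
  "is_refinement Q p \<longleftrightarrow> (\<forall>c. finite (Q c) \<and>
     (\<Sum>J\<in>Q c. snd J - fst J) \<le> (\<Sum>J\<in>p c. snd J - fst J) \<and>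
     (\<forall>J\<in>Q c. fst J < snd J \<and> (\<exists>J'\<in>p c. fst J' \<le> fst J \<and> snd J \<le> snd J')))"

lemma is_partition_interval:
  assumes "is_partition T S" "J \<in> S"
  shows "0 \<le> fst J \<and> fst J < snd J \<and> snd J \<le> T"
proof -
  have "{fst J..snd J} \<subseteq> (\<Union>(a, b)\<in>S. {a..b})"
    using UN_upper[OF assms(2), of "\<lambda>(a, b). {a..b}"] by (simp add: case_prod_beta)
  moreover have "fst J < snd J"
    using assms unfolding is_partition_def by (auto simp: case_prod_beta)
  ultimately show ?thesis using assms(1) unfolding is_partition_def by auto
qed

lemma is_refinement_self:
  assumes "\<And>c. is_partition T (p c)"
  shows "is_refinement p p"
proof -
  have "finite (p c)" for c using assms by (simp add: is_partition_def)
  moreover have "fst J < snd J" if "J \<in> p c" for c J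
    using is_partition_interval[OF assms that] by simp
  ultimately show ?thesis unfolding is_refinement_def by fastforce
qed

lemma is_refinement_subdivide:
  assumes Q: "is_refinement Q p" and ab: "ab \<in> Q c"
  shows "is_refinement (subdivide Q c ab) p"
proof -
  obtain a b where ab_eq: "ab = (a, b)" by fastforce
  define m where "m = (a + b) / 2"
  define halves where "halves = {(a, m), (m, b)}"
  let ?len = "\<lambda>J::real \<times> real. snd J - fst J"
  have fin: "finite (Q c)"
    and sumQ: "sum ?len (Q c) \<le> sum ?len (p c)"
    and inQ: "\<forall>J\<in>Q c. fst J < snd J \<and> (\<exists>J'\<in>p c. fst J' \<le> fst J \<and> snd J \<le> snd J')"
    using Q unfolding is_refinement_def by auto
  then have "a < b" using ab ab_eq by fastforce
  then have "a < m" "m < b" by (auto simp: m_def)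
  have "sum ?len ((Q c - {ab}) \<union> halves) \<le> sum ?len (Q c - {ab}) + sum ?len halves"
  proof -
    have "0 \<le> sum ?len ((Q c - {ab}) \<inter> halves)"
      using inQ by (intro sum_nonneg) fastforce
    then show ?thesis
      using sum.union_inter[of "Q c - {ab}" halves ?len] fin by (simp add: halves_def)
  qed
  also have "\<dots> = sum ?len (Q c)"
    using fin ab \<open>a < m\<close> \<open>m < b\<close> by (simp add: sum_diff1 halves_def ab_eq m_def field_simps)
  finally have "sum ?len ((Q c - {ab}) \<union> halves) \<le> sum ?len (p c)" using sumQ by linarith
  moreover have "\<forall>J\<in>(Q c - {ab}) \<union> halves.
      fst J < snd J \<and> (\<exists>J'\<in>p c. fst J' \<le> fst J \<and> snd J \<le> snd J')"
  proof -
    obtain J' where J': "J' \<in> p c" "fst J' \<le> a" "b \<le> snd J'"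
      using inQ ab unfolding ab_eq by fastforce
    then have "\<forall>J\<in>halves. fst J < snd J \<and> fst J' \<le> fst J \<and> snd J \<le> snd J'"
      using \<open>a < m\<close> \<open>m < b\<close> unfolding halves_def by auto
    then show ?thesis using inQ J'(1) by blast
  qed
  moreover have "subdivide Q c ab = Q(c := (Q c - {ab}) \<union> halves)"
    by (simp add: subdivide_def halves_def ab_eq m_def)
  ultimately show ?thesis using Q fin unfolding is_refinement_def by (auto simp: halves_def)
qed

lemma is_refinement_midpoint_mem:
  assumes "is_refinement Q p" "ab \<in> Q c" "\<forall>J\<in>p c. 0 \<le> fst J \<and> snd J \<le> T"
  shows "(fst ab + snd ab) / 2 \<in> {0..T}"
  using assms unfolding is_refinement_def by fastforce

text \<open>Shrinking an interval moves its midpoint by at most half the lost length, which the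
  term \<open>L1 * l / 2\<close> of \<open>\<psi>\<close> absorbs; so the safety margin can only grow under refinement.\<close>

lemma is_refinement_safety_margin_ge:
  assumes "is_refinement Q p" "ab \<in> Q c"
    and p: "\<forall>J\<in>p c. 0 \<le> fst J \<and> snd J \<le> T \<and> m \<le> safety_margin \<psi> D d0 x c J"
    and \<psi>: "\<psi> = (\<lambda>l. L1 * l / 2 + L2 * l powr \<eta>)" and "L2 \<ge> 0" "\<eta> > 0"
    and lip: "\<And>t1 t2. t1 \<in> {0..T} \<Longrightarrow> t2 \<in> {0..T} \<Longrightarrow> \<bar>D c t1 x - D c t2 x\<bar> \<le> L1 * \<bar>t1 - t2\<bar>"
  shows "m \<le> safety_margin \<psi> D d0 x c ab"
proof -
  obtain J where J: "J \<in> p c" "fst J \<le> fst ab" "fst ab < snd ab" "snd ab \<le> snd J"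
    using assms unfolding is_refinement_def by blast
  have "safety_margin \<psi> D d0 x c J \<le> safety_margin \<psi> D d0 x c ab"
    using midpoint_margin_mono[of T "\<lambda>t. D c t x" L1 L2 \<eta> "fst J" "fst ab" "snd ab" "snd J", OF lip]
      J p \<open>L2 \<ge> 0\<close> \<open>\<eta> > 0\<close>
    by (simp add: safety_margin_def \<psi>)
  then show ?thesis using p J by fastforce
qed

lemma safe_margin_pos:
  fixes p :: "'c::finite partn"
  assumes "\<And>c. finite (p c)" "\<not> unsafe \<psi> D d0 p x"
  shows "\<exists>m>0. \<forall>c. \<forall>J\<in>p c. m \<le> safety_margin \<psi> D d0 x c J"
proof -
  let ?margins = "(\<lambda>(c, J). safety_margin \<psi> D d0 x c J) ` (SIGMA c:UNIV. p c)"
  define m where "m = Min (insert 1 ?margins)"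
  have "finite ?margins" using assms by auto
  moreover have "\<forall>y\<in>?margins. 0 < y"
    using assms(2) by (force simp: unsafe_def unsafe_tuple_iff)
  ultimately have "m > 0" by (simp add: m_def)
  moreover have "\<forall>c. \<forall>J\<in>p c. m \<le> safety_margin \<psi> D d0 x c J"
    using \<open>finite ?margins\<close> by (auto simp: m_def intro: Min_le)
  ultimately show ?thesis by blast
qed

lemma not_unsafe_near:
  assumes margin: "\<And>c ab. ab \<in> Q c \<Longrightarrow>
      m \<le> safety_margin \<psi> D d0 x c ab \<and> (fst ab + snd ab) / 2 \<in> {a..b}"
    and close: "\<forall>c. \<forall>t\<in>{a..b}. \<bar>D c t y - D c t x\<bar> < m"
  shows "\<not> unsafe \<psi> D d0 Q y"
proof
  assume "unsafe \<psi> D d0 Q y"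
  then obtain c ab where ab: "ab \<in> Q c" and unsafe_y: "safety_margin \<psi> D d0 y c ab \<le> 0"
    by (auto simp: unsafe_def unsafe_tuple_iff)
  have safe_x: "m \<le> safety_margin \<psi> D d0 x c ab" and mid: "(fst ab + snd ab) / 2 \<in> {a..b}"
    using margin[OF ab] by blast+
  have "\<bar>D c ((fst ab + snd ab) / 2) y - D c ((fst ab + snd ab) / 2) x\<bar> < m"
    using close mid by blast
  with safe_x unsafe_y show False unfolding safety_margin_def by linarith
qed

lemma safe_ball_for_refinements:
  fixes D :: "'c::finite \<Rightarrow> real \<Rightarrow> 'a::heine_borel \<Rightarrow> real"
  assumes part: "\<And>c. is_partition T (p c)" and safe: "\<not> unsafe \<psi> D d0 p x"
    and \<psi>: "\<psi> = (\<lambda>l. L1 * l / 2 + L2 * l powr \<eta>)" "0 \<le> L1" "0 \<le> L2" "0 < \<eta>"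
    and lip: "\<And>c t1 t2. t1 \<in> {0..T} \<Longrightarrow> t2 \<in> {0..T} \<Longrightarrow>
      \<bar>D c t1 x - D c t2 x\<bar> \<le> L1 * \<bar>t1 - t2\<bar>"
    and cont: "\<And>c. continuous_on UNIV (\<lambda>(t, y). D c t y)"
  obtains m \<rho> where "m > 0" "\<rho> > 0"
    and "\<And>Q c ab. is_refinement Q p \<Longrightarrow> ab \<in> Q c \<Longrightarrow>
      (fst ab + snd ab) / 2 \<in> {0..T} \<and> m \<le> D c ((fst ab + snd ab) / 2) x - d0"
    and "\<And>Q y. is_refinement Q p \<Longrightarrow> dist y x < \<rho> \<Longrightarrow> \<not> unsafe \<psi> D d0 Q y"
proof -
  have within: "\<forall>J\<in>p c. 0 \<le> fst J \<and> snd J \<le> T" for c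
    using is_partition_interval part by blast
  obtain m where "m > 0" and m: "\<forall>c. \<forall>J\<in>p c. m \<le> safety_margin \<psi> D d0 x c J"
    using safe_margin_pos[OF _ safe] part by (auto simp: is_partition_def)
  have margin: "m \<le> safety_margin \<psi> D d0 x c ab \<and> (fst ab + snd ab) / 2 \<in> {0..T}"
    if "is_refinement Q p" "ab \<in> Q c" for Q c ab
  proof -
    have "\<forall>J\<in>p c. 0 \<le> fst J \<and> snd J \<le> T \<and> m \<le> safety_margin \<psi> D d0 x c J"
      using within m by blast
    from is_refinement_safety_margin_ge[OF that this \<psi>(1,3,4) lip]
    show ?thesis using is_refinement_midpoint_mem[OF that within] by blast
  qed
  have clearance: "(fst ab + snd ab) / 2 \<in> {0..T} \<and> m \<le> D c ((fst ab + snd ab) / 2) x - d0"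
    if "is_refinement Q p" "ab \<in> Q c" for Q c ab
  proof -
    have "fst ab \<le> snd ab" using that unfolding is_refinement_def by fastforce
    then have "0 \<le> \<psi> (snd ab - fst ab)" using \<psi> by simp
    then show ?thesis using margin[OF that] by (simp add: safety_margin_def)
  qed
  obtain \<rho> where "\<rho> > 0"
    and close: "\<forall>c. \<forall>t\<in>{0..T}. \<forall>y. dist y x < \<rho> \<longrightarrow> \<bar>D c t y - D c t x\<bar> < m"
    using uniformly_close_near[where D = D and a = 0 and b = T and x = x, OF cont \<open>m > 0\<close>] by blast
  have "\<not> unsafe \<psi> D d0 Q y" if "is_refinement Q p" "dist y x < \<rho>" for Q y
    using not_unsafe_near[OF margin[OF that(1)]] close that(2) by blast
  with \<open>m > 0\<close> \<open>\<rho> > 0\<close> clearance show ?thesis using that by blast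
qed

lemma C2_imp_continuous_derivative:
  assumes "C2 f"
  shows "\<exists>f'. (\<forall>z. (f has_derivative blinfun_apply (f' z)) (at z)) \<and> continuous_on UNIV f'"
proof -
  obtain f' f'' where f': "\<forall>z. (f has_derivative blinfun_apply (f' z)) (at z)"
    and f'': "\<forall>z. (f' has_derivative blinfun_apply (f'' z)) (at z)"
    using assms unfolding C2_def by blast
  have "continuous_on UNIV f'"
    by (rule has_derivative_continuous_on) (use f'' in auto)
  with f' show ?thesis by blast
qed

lemma C2_imp_continuous:
  assumes "C2 f"
  shows "continuous_on UNIV f"
proof -
  obtain f' where "\<forall>z. (f has_derivative blinfun_apply (f' z)) (at z)"
    using C2_imp_continuous_derivative[OF assms] by blast
  then show ?thesis by (intro has_derivative_continuous_on) blast
qed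

lemma C2_pos_derivative_bounded:
  assumes "C2_pos P" and "0 < m"
  obtains P' BP where "\<And>y. 0 < y \<Longrightarrow> (P has_real_derivative P' y) (at y)"
    and "\<And>y. y \<in> {m..Y} \<Longrightarrow> \<bar>P' y\<bar> \<le> BP" and "0 \<le> BP"
proof -
  obtain P' P'' where P': "\<forall>y>0. (P has_real_derivative P' y) (at y)"
    and P'': "\<forall>y>0. (P' has_real_derivative P'' y) (at y)"
    using assms unfolding C2_pos_def by blast
  have "isCont P' y" if "y \<in> {m..Y}" for y
    using P'' DERIV_isCont that \<open>0 < m\<close> by (metis atLeastAtMost_iff order_less_le_trans)
  then have "continuous_on {m..Y} P'" by (blast intro: continuous_at_imp_continuous_on)
  then have "bounded (P' ` {m..Y})"
    by (intro compact_imp_bounded compact_continuous_image compact_Icc)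
  then obtain BP where "BP > 0" and "\<And>y. y \<in> {m..Y} \<Longrightarrow> \<bar>P' y\<bar> \<le> BP"
    unfolding bounded_pos by auto
  with P' show ?thesis using that[of P' BP] by auto
qed

lemma has_derivative_partial_snd:
  assumes "(f has_derivative f') (at (t, x))"
  shows "((\<lambda>y. f (t, y)) has_derivative (\<lambda>h. f' (0, h))) (at x)"
proof -
  have "((\<lambda>y. (t, y)) has_derivative (\<lambda>h. (0, h))) (at x)"
    by (rule has_derivative_Pair[OF has_derivative_const has_derivative_ident, simplified])
  from has_derivative_compose[OF this assms] show ?thesis .
qed

lemma C2_family_partial_bounds:
  fixes D :: "'c::finite \<Rightarrow> real \<Rightarrow> 'a::real_normed_vector \<Rightarrow> real"
  assumes D: "\<And>c. C2 (\<lambda>(t, y). D c t y)"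
  obtains Dx BD Y where "\<And>c t. ((\<lambda>y. D c t y) has_derivative Dx c t) (at x)"
    and "\<And>c t h. t \<in> {a..b} \<Longrightarrow> \<bar>Dx c t h\<bar> \<le> BD * norm h" and "0 \<le> BD"
    and "\<And>c t. t \<in> {a..b} \<Longrightarrow> \<bar>D c t x\<bar> \<le> Y"
proof -
  obtain Fd where Fd: "\<And>c z. ((\<lambda>(t, y). D c t y) has_derivative blinfun_apply (Fd c z)) (at z)"
    and Fd_cont: "\<And>c. continuous_on UNIV (Fd c)"
    using C2_imp_continuous_derivative[OF D] by metis
  have "continuous_on {a..b} (\<lambda>t. Fd c (t, x))" for c
    by (rule continuous_on_compose2[OF Fd_cont]) (auto intro!: continuous_intros)
  then obtain BD where BD: "\<And>c t. t \<in> {a..b} \<Longrightarrow> norm (Fd c (t, x)) \<le> BD"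
    using bounded_on_interval_finite_family[where g = "\<lambda>c t. Fd c (t, x)"] by blast
  have "\<bar>Fd c (t, x) (0, h)\<bar> \<le> norm BD * norm h" if "t \<in> {a..b}" for c t h
  proof -
    have "\<bar>Fd c (t, x) (0, h)\<bar> \<le> norm (Fd c (t, x)) * norm h"
      using norm_blinfun[of "Fd c (t, x)" "(0, h)"] by (simp add: norm_Pair)
    also have "\<dots> \<le> norm BD * norm h"
      using BD[OF that, of c] by (intro mult_right_mono) auto
    finally show ?thesis .
  qed
  moreover have "continuous_on {a..b} (\<lambda>t. D c t x)" for c
    using C2_imp_continuous[OF D]
    by (rule continuous_on_compose2[of UNIV "\<lambda>(t, y). D c t y" _ "\<lambda>t. (t, x)", simplified])
      (auto intro!: continuous_intros)
  then obtain Y where "\<And>c t. t \<in> {a..b} \<Longrightarrow> norm (D c t x) \<le> Y"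
    using bounded_on_interval_finite_family[where g = "\<lambda>c t. D c t x"] by blast
  moreover have "((\<lambda>y. D c t y) has_derivative (\<lambda>h. Fd c (t, x) (0, h))) (at x)" for c t
    using has_derivative_partial_snd[OF Fd[of c "(t, x)"]] by simp
  ultimately show ?thesis
    using that[of "\<lambda>c t h. Fd c (t, x) (0, h)" "norm BD" Y] by auto
qed

lemma energy_has_derivative:
  fixes D :: "'c::finite \<Rightarrow> real \<Rightarrow> real^'n::finite \<Rightarrow> real"
  assumes "(Obj has_derivative O') (at x)"
    and "\<And>c ab. ab \<in> Q c \<Longrightarrow> ((\<lambda>y. D c ((fst ab + snd ab) / 2) y) has_derivative Dx c ab) (at x)"
    and "\<And>c ab. ab \<in> Q c \<Longrightarrow>
      (P has_real_derivative P' c ab) (at (D c ((fst ab + snd ab) / 2) x - d0))"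
  shows "(energy Obj mu P D d0 Q has_derivative (\<lambda>h. O' h + mu *
      (\<Sum>c\<in>UNIV. \<Sum>ab\<in>Q c. (snd ab - fst ab) * (Dx c ab h * P' c ab)))) (at x)"
proof -
  have "((\<lambda>y. (snd ab - fst ab) * P (D c ((fst ab + snd ab) / 2) y - d0)) has_derivative
      (\<lambda>h. (snd ab - fst ab) * (Dx c ab h * P' c ab))) (at x)" if "ab \<in> Q c" for c ab
    using DERIV_compose_FDERIV[OF assms(3)[OF that] has_derivative_diff[OF assms(2)[OF that]
          has_derivative_const]]
    by (intro has_derivative_mult_right) simp
  then have "((\<lambda>y. \<Sum>c\<in>UNIV. \<Sum>ab\<in>Q c. (snd ab - fst ab) * P (D c ((fst ab + snd ab) / 2) y - d0))
      has_derivative (\<lambda>h. \<Sum>c\<in>UNIV. \<Sum>ab\<in>Q c. (snd ab - fst ab) * (Dx c ab h * P' c ab))) (at x)"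
    by (intro has_derivative_sum)
  moreover have "energy Obj mu P D d0 Q = (\<lambda>y. Obj y + mu * (\<Sum>c\<in>UNIV. \<Sum>ab\<in>Q c.
      (snd ab - fst ab) * P (D c ((fst ab + snd ab) / 2) y - d0)))"
    by (simp add: fun_eq_iff energy_def case_prod_beta)
  ultimately show ?thesis
    by (simp only:) (rule has_derivative_add[OF assms(1) has_derivative_mult_right])
qed

lemma norm_grad_energy_le:
  fixes D :: "'c::finite \<Rightarrow> real \<Rightarrow> real^'n::finite \<Rightarrow> real"
  assumes O': "(Obj has_derivative O') (at x)" "\<And>h. \<bar>O' h\<bar> \<le> BO * norm h"
    and Dx: "\<And>c ab. ab \<in> Q c \<Longrightarrow> ((\<lambda>y. D c ((fst ab + snd ab) / 2) y) has_derivative Dx c ab) (at x)"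
      "\<And>c ab h. ab \<in> Q c \<Longrightarrow> \<bar>Dx c ab h\<bar> \<le> BD * norm h"
    and P': "\<And>c ab. ab \<in> Q c \<Longrightarrow>
        (P has_real_derivative P' c ab) (at (D c ((fst ab + snd ab) / 2) x - d0))"
      "\<And>c ab. ab \<in> Q c \<Longrightarrow> \<bar>P' c ab\<bar> \<le> BP"
    and len: "\<And>c ab. ab \<in> Q c \<Longrightarrow> fst ab \<le> snd ab"
      "(\<Sum>c\<in>UNIV. \<Sum>ab\<in>Q c. snd ab - fst ab) \<le> S"
    and "0 \<le> BD" "0 \<le> BP"
  shows "norm (grad (energy Obj mu P D d0 Q) x) \<le> BO + \<bar>mu\<bar> * (S * (BD * BP))"
proof (rule norm_grad_le[OF energy_has_derivative[where Dx = Dx and P' = P', OF O'(1) Dx(1) P'(1)]])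
  fix h
  let ?term = "\<lambda>c ab. (snd ab - fst ab) * (Dx c ab h * P' c ab)"
  have term_le: "\<bar>?term c ab\<bar> \<le> (snd ab - fst ab) * (BD * norm h * BP)" if "ab \<in> Q c" for c ab
  proof -
    have "\<bar>Dx c ab h * P' c ab\<bar> \<le> BD * norm h * BP"
      unfolding abs_mult using Dx(2)[OF that] P'(2)[OF that] \<open>0 \<le> BD\<close>
      by (intro mult_mono) auto
    then show ?thesis using len(1)[OF that] by (simp add: abs_mult mult_left_mono)
  qed
  have "\<bar>\<Sum>c\<in>UNIV. \<Sum>ab\<in>Q c. ?term c ab\<bar> \<le> (\<Sum>c\<in>UNIV. \<Sum>ab\<in>Q c. \<bar>?term c ab\<bar>)"
    by (rule order_trans[OF sum_abs sum_mono[OF sum_abs]])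
  also have "\<dots> \<le> (\<Sum>c\<in>UNIV. \<Sum>ab\<in>Q c. (snd ab - fst ab) * (BD * norm h * BP))"
    using term_le by (intro sum_mono) auto
  also have "\<dots> = (\<Sum>c\<in>UNIV. \<Sum>ab\<in>Q c. snd ab - fst ab) * (BD * norm h * BP)"
    by (simp add: sum_distrib_right)
  also have "\<dots> \<le> S * (BD * norm h * BP)"
    using len(2) \<open>0 \<le> BD\<close> \<open>0 \<le> BP\<close> by (intro mult_right_mono) auto
  finally have "\<bar>mu * (\<Sum>c\<in>UNIV. \<Sum>ab\<in>Q c. ?term c ab)\<bar> \<le> \<bar>mu\<bar> * (S * (BD * norm h * BP))"
    unfolding abs_mult by (rule mult_left_mono) simp
  then show "\<bar>O' h + mu * (\<Sum>c\<in>UNIV. \<Sum>ab\<in>Q c. ?term c ab)\<bar> \<le> (BO + \<bar>mu\<bar> * (S * (BD * BP))) * norm h"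
    using O'(2)[of h] abs_triangle_ineq[of "O' h"] by (simp add: algebra_simps)
qed

lemma grad_energy_bounded_on_refinements:
  fixes D :: "'c::finite \<Rightarrow> real \<Rightarrow> real^'n::finite \<Rightarrow> real"
  assumes D: "\<And>c. C2 (\<lambda>(t, y). D c t y)" and P: "C2_pos P" and Obj: "Obj differentiable (at x)"
    and "m > 0"
    and clearance: "\<And>Q c ab. is_refinement Q p \<Longrightarrow> ab \<in> Q c \<Longrightarrow>
      (fst ab + snd ab) / 2 \<in> {0..T} \<and> m \<le> D c ((fst ab + snd ab) / 2) x - d0"
  shows "\<exists>K. \<forall>Q. is_refinement Q p \<longrightarrow> norm (grad (energy Obj mu P D d0 Q) x) \<le> K"
proof -
  obtain Dx BD Y where Dx: "\<And>c t. ((\<lambda>y. D c t y) has_derivative Dx c t) (at x)"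
    and BD: "\<And>c t h. t \<in> {0..T} \<Longrightarrow> \<bar>Dx c t h\<bar> \<le> BD * norm h" "0 \<le> BD"
    and Y: "\<And>c t. t \<in> {0..T} \<Longrightarrow> \<bar>D c t x\<bar> \<le> Y"
    using C2_family_partial_bounds[where D = D and x = x and a = 0 and b = T, OF D] by metis
  obtain P' BP where P': "\<And>y. 0 < y \<Longrightarrow> (P has_real_derivative P' y) (at y)"
    and BP: "\<And>y. y \<in> {m..Y - d0} \<Longrightarrow> \<bar>P' y\<bar> \<le> BP" "0 \<le> BP"
    using C2_pos_derivative_bounded[OF P \<open>m > 0\<close>] by metis
  obtain O' where O': "(Obj has_derivative O') (at x)" using Obj by (auto simp: differentiable_def)
  obtain BO where BO: "\<And>h. \<bar>O' h\<bar> \<le> BO * norm h"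
    using has_derivative_bounded_linear[OF O'] bounded_linear.bounded
    by (metis mult.commute real_norm_def)
  define S where "S = (\<Sum>c\<in>UNIV. \<Sum>J\<in>p c. snd J - fst J)"
  have "norm (grad (energy Obj mu P D d0 Q) x) \<le> BO + \<bar>mu\<bar> * (S * (BD * BP))"
    if Q: "is_refinement Q p" for Q
  proof (rule norm_grad_energy_le[where Dx = "\<lambda>c ab. Dx c ((fst ab + snd ab) / 2)"
        and P' = "\<lambda>c ab. P' (D c ((fst ab + snd ab) / 2) x - d0)", OF O'])
    fix c ab assume ab: "ab \<in> Q c"
    let ?mid = "(fst ab + snd ab) / 2"
    have mid: "?mid \<in> {0..T}" and "m \<le> D c ?mid x - d0" using clearance[OF Q ab] by auto
    then show "\<bar>P' (D c ?mid x - d0)\<bar> \<le> BP" using BP(1) Y[OF mid, of c] by simp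
    show "(P has_real_derivative P' (D c ?mid x - d0)) (at (D c ?mid x - d0))"
      using P' \<open>m \<le> D c ?mid x - d0\<close> \<open>m > 0\<close> by simp
    show "((\<lambda>y. D c ?mid y) has_derivative Dx c ?mid) (at x)" by (rule Dx)
    show "\<bar>Dx c ?mid h\<bar> \<le> BD * norm h" for h using BD(1)[OF mid] .
    show "fst ab \<le> snd ab" using Q ab unfolding is_refinement_def by fastforce
  next
    show "(\<Sum>c\<in>UNIV. \<Sum>ab\<in>Q c. snd ab - fst ab) \<le> S"
      using Q unfolding is_refinement_def S_def by (intro sum_mono) blast
  qed (use BO BD(2) BP(2) in auto)
  then show ?thesis by blast
qed

lemma norm_direction_le:
  assumes "norm (grad E x) \<le> K" and "\<beta> > 0"
    and coercive: "\<And>v. \<beta> * (v \<bullet> v) \<le> v \<bullet> (M (hess E x) *v v)"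
  shows "norm (direction newton M E x) \<le> max K (K / \<beta>)"
proof -
  have "norm (matrix_inv (M (hess E x)) *v - grad E x) \<le> K / \<beta>"
    using norm_matrix_inv_mult_le[OF \<open>\<beta> > 0\<close> coercive, of "- grad E x"] assms(1,2)
    by (smt (verit) divide_right_mono norm_minus_cancel)
  then show ?thesis using assms(1) by (auto simp: direction_def)
qed

locale line_search_run =
  fixes Obj :: "real^'n::finite \<Rightarrow> real" and mu :: real and P :: "real \<Rightarrow> real"
    and D :: "'c::finite \<Rightarrow> real \<Rightarrow> real^'n \<Rightarrow> real" and d0 :: real and \<psi> :: "real \<Rightarrow> real"
    and \<gamma> cW :: real and newton :: bool and M :: "real^'n^'n \<Rightarrow> real^'n^'n" and x :: "real^'n"
    and p :: "'c partn" and s :: "nat \<Rightarrow> 'c partn \<times> real \<times> real \<times> (real^'n)" and sub :: "nat \<Rightarrow> bool"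
  assumes \<gamma>: "0 < \<gamma>" "\<gamma> < 1"
    and start: "is_refinement (fst (s 0)) p" "0 < fst (snd (s 0))" "0 < fst (snd (snd (s 0)))"
    and run: "\<And>n. ls_step Obj mu P D d0 \<psi> \<gamma> cW newton M x (s n) (sub n) (s (Suc n))"
    and infinitely_many_sub: "\<exists>\<^sub>\<infinity>n. sub n"
begin

abbreviation prt :: "nat \<Rightarrow> 'c partn" where "prt n \<equiv> fst (s n)"
abbreviation alpha :: "nat \<Rightarrow> real" where "alpha n \<equiv> fst (snd (s n))"
abbreviation eps_alpha :: "nat \<Rightarrow> real" where "eps_alpha n \<equiv> fst (snd (snd (s n)))"
abbreviation dir :: "nat \<Rightarrow> real^'n" where "dir n \<equiv> snd (snd (snd (s n)))"

lemma step_cases: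
  "(sub n \<and> alpha n \<le> eps_alpha n \<and>
     (\<exists>c ab. unsafe_tuple \<psi> D d0 (prt n) (x + alpha n *\<^sub>R dir n) c ab \<and>
        prt (Suc n) = subdivide (prt n) c ab) \<and>
     alpha (Suc n) = alpha n \<and> eps_alpha (Suc n) = \<gamma> * eps_alpha n \<and>
     dir (Suc n) = direction newton M (energy Obj mu P D d0 (prt (Suc n))) x)
   \<or> (\<not> sub n \<and> prt (Suc n) = prt n \<and> alpha (Suc n) = \<gamma> * alpha n \<and>
     eps_alpha (Suc n) = eps_alpha n \<and> dir (Suc n) = dir n)"
proof -
  have "(\<exists>c ab. unsafe_tuple \<psi> D d0 (prt n) (x + alpha n *\<^sub>R dir n) c ab \<and>
       (if alpha n \<le> eps_alpha n then
          sub n \<and> prt (Suc n) = subdivide (prt n) c ab \<and> eps_alpha (Suc n) = \<gamma> * eps_alpha n \<and>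
          alpha (Suc n) = alpha n \<and>
          dir (Suc n) = direction newton M (energy Obj mu P D d0 (prt (Suc n))) x
        else \<not> sub n \<and> prt (Suc n) = prt n \<and> alpha (Suc n) = \<gamma> * alpha n \<and>
          eps_alpha (Suc n) = eps_alpha n \<and> dir (Suc n) = dir n))
    \<or> (\<not> sub n \<and> prt (Suc n) = prt n \<and> alpha (Suc n) = \<gamma> * alpha n \<and>
        eps_alpha (Suc n) = eps_alpha n \<and> dir (Suc n) = dir n)"
    using run[of n] unfolding ls_step_def Let_def by blast
  then show ?thesis by (cases "alpha n \<le> eps_alpha n") (simp_all only: if_True if_False; blast)+
qed

lemma prt_Suc: "prt (Suc n) = prt n \<or> (\<exists>c ab. ab \<in> prt n c \<and> prt (Suc n) = subdivide (prt n) c ab)"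
  using step_cases[of n] unfolding unsafe_tuple_def by blast

lemma alpha_Suc: "alpha (Suc n) = alpha n \<or> alpha (Suc n) = \<gamma> * alpha n"
  using step_cases[of n] by blast

lemma eps_alpha_Suc: "eps_alpha (Suc n) = (if sub n then \<gamma> * eps_alpha n else eps_alpha n)"
  using step_cases[of n] by (cases "sub n") (simp_all only: if_True if_False; blast)+

lemma dir_Suc:
  "dir (Suc n) = dir n \<or> dir (Suc n) = direction newton M (energy Obj mu P D d0 (prt (Suc n))) x"
  using step_cases[of n] by blast

lemma prt_is_refinement: "is_refinement (prt n) p"
proof (induction n)
  case 0
  show ?case using start(1) .
next
  case (Suc n)
  then show ?case using prt_Suc[of n] is_refinement_subdivide[OF Suc.IH] by auto
qed

lemma alpha_pos: "0 < alpha n"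
proof (induction n)
  case (Suc n)
  then show ?case using alpha_Suc[of n] \<gamma>(1) by auto
qed (use start(2) in simp)

lemma eps_alpha_pos: "0 < eps_alpha n"
proof (induction n)
  case (Suc n)
  then show ?case using eps_alpha_Suc[of n] \<gamma>(1) by simp
qed (use start(3) in simp)

lemma eps_alpha_antimono: "m \<le> n \<Longrightarrow> eps_alpha n \<le> eps_alpha m"
proof (rule lift_Suc_antimono_le[of eps_alpha])
  show "eps_alpha (Suc k) \<le> eps_alpha k" for k
    using eps_alpha_Suc[of k] eps_alpha_pos[of k] \<gamma> by (simp add: mult_left_le_one_le)
qed

lemma eps_alpha_arbitrarily_small:
  assumes "e > 0"
  shows "\<exists>n. eps_alpha n < e"
proof -
  have frequent: "\<exists>m>n. sub m" for n using infinitely_many_sub unfolding INFM_nat by blast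
  have "\<exists>n. eps_alpha n \<le> eps_alpha 0 * \<gamma> ^ j" for j
  proof (induction j)
    case (Suc j)
    then obtain n where n: "eps_alpha n \<le> eps_alpha 0 * \<gamma> ^ j" by blast
    obtain m where "m > n" "sub m" using frequent by blast
    then have "eps_alpha (Suc m) = \<gamma> * eps_alpha m" using eps_alpha_Suc[of m] by simp
    also have "\<dots> \<le> \<gamma> * eps_alpha n" using eps_alpha_antimono[of n m] \<open>m > n\<close> \<gamma> by simp
    also have "\<dots> \<le> eps_alpha 0 * \<gamma> ^ Suc j" using n \<gamma> by (simp add: mult_left_mono mult_ac)
    finally show ?case by blast
  qed auto
  moreover obtain j where "\<gamma> ^ j < e / eps_alpha 0"
    using real_arch_pow_inv[of "e / eps_alpha 0" \<gamma>] \<gamma> assms eps_alpha_pos[of 0] by auto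
  then have "eps_alpha 0 * \<gamma> ^ j < e"
    using eps_alpha_pos[of 0] by (simp add: pos_less_divide_eq mult.commute)
  ultimately show ?thesis by (meson order_le_less_trans)
qed

context
  fixes K :: real
  assumes direction_bounded:
    "\<And>Q. is_refinement Q p \<Longrightarrow> norm (direction newton M (energy Obj mu P D d0 Q) x) \<le> K"
begin

lemma norm_dir_le: "norm (dir n) \<le> max K (norm (dir 0))"
proof (induction n)
  case (Suc n)
  from dir_Suc[of n] show ?case
  proof
    assume "dir (Suc n) = dir n"
    then show ?case using Suc.IH by simp
  next
    assume "dir (Suc n) = direction newton M (energy Obj mu P D d0 (prt (Suc n))) x"
    then show ?case using direction_bounded[OF prt_is_refinement] by (simp add: le_max_iff_disj)
  qed
qed simp

lemma unsafe_trial_point_near: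
  assumes "\<rho> > 0"
  shows "\<exists>Q y. is_refinement Q p \<and> dist y x < \<rho> \<and> unsafe \<psi> D d0 Q y"
proof -
  define K' where "K' = max K (norm (dir 0))"
  have "K' \<ge> 0" by (simp add: K'_def le_max_iff_disj)
  obtain n where "eps_alpha n < \<rho> / (K' + 1)"
    using eps_alpha_arbitrarily_small[of "\<rho> / (K' + 1)"] assms \<open>K' \<ge> 0\<close> by auto
  then have "eps_alpha n * (K' + 1) < \<rho>" using \<open>K' \<ge> 0\<close> by (simp add: pos_less_divide_eq)
  obtain m where "m > n" "sub m" using infinitely_many_sub unfolding INFM_nat by blast
  then have "alpha m \<le> eps_alpha m"
    and "\<exists>c ab. unsafe_tuple \<psi> D d0 (prt m) (x + alpha m *\<^sub>R dir m) c ab"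
    using step_cases[of m] by blast+
  then have unsafe_m: "unsafe \<psi> D d0 (prt m) (x + alpha m *\<^sub>R dir m)" by (simp add: unsafe_def)
  have "dist (x + alpha m *\<^sub>R dir m) x = alpha m * norm (dir m)"
    using alpha_pos[of m] by (simp add: dist_norm)
  also have "\<dots> \<le> eps_alpha n * K'"
    using \<open>alpha m \<le> eps_alpha m\<close> eps_alpha_antimono[of n m] \<open>m > n\<close> alpha_pos[of m]
      norm_dir_le[of m] \<open>K' \<ge> 0\<close> unfolding K'_def by (intro mult_mono) auto
  also have "\<dots> \<le> eps_alpha n * (K' + 1)" using eps_alpha_pos[of n] by simp
  also have "\<dots> < \<rho>" by fact
  finally show ?thesis using prt_is_refinement unsafe_m by blast
qed

end

end

theorem lemma7:
  fixes B :: "'b::finite \<Rightarrow> real \<Rightarrow> real^'n::finite \<Rightarrow> (real^3) set"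
    and Ob :: "'o::finite \<Rightarrow> (real^3) set"
    and T d0 L1 L2 \<eta> mu \<alpha>0 \<gamma> cW \<beta>l \<beta>u \<epsilon>5 e\<alpha>0 :: real
    and Obj :: "real^'n \<Rightarrow> real"
    and P :: "real \<Rightarrow> real"
    and M :: "real^'n^'n \<Rightarrow> real^'n^'n"
    and newton :: bool
    and \<Theta> :: "(real^'n) set"
    and \<theta> d_in :: "real^'n"
    and part0 :: "('b \<times> 'o) partn"
    and s :: "nat \<Rightarrow> ('b \<times> 'o) partn \<times> real \<times> real \<times> (real^'n)"
    and sub :: "nat \<Rightarrow> bool"
  defines "D \<equiv> (\<lambda>c t x. setdist (B (fst c) t x) (Ob (snd c)))"
    and "\<psi> \<equiv> (\<lambda>x. L1 * x / 2 + L2 * x powr \<eta>)"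
  assumes A1: "\<forall>c. C2 (\<lambda>(t, x). D c t x)"
    and A2: "bounded \<Theta>" "\<theta> \<in> \<Theta>"
      "\<forall>n. \<theta> + fst (snd (s n)) *\<^sub>R snd (snd (snd (s n))) \<in> \<Theta>"
    and A3: "C2_pos P" "\<forall>x y. 0 < x \<longrightarrow> x \<le> y \<longrightarrow> P y \<le> P x"
      "filterlim P at_top (at_right 0)" "(P \<longlongrightarrow> 0) at_top"
      "filterlim (\<lambda>x. x * P x) at_top (at_right 0)"
    and Obj: "twice_diff Obj"
    and T: "T > 0" and d0: "d0 \<ge> 0"
    and L1: "\<forall>c t1 t2 x. t1 \<in> {0..T} \<longrightarrow> t2 \<in> {0..T} \<longrightarrow> \<bar>D c t1 x - D c t2 x\<bar> \<le> L1 * \<bar>t1 - t2\<bar>"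
    and L2: "L2 > 0" and \<eta>: "\<eta> > 0"
    and mu: "mu > 0" and \<alpha>0: "\<alpha>0 > 0" and \<gamma>: "0 < \<gamma>" "\<gamma> < 1"
    and cW: "0 < cW" "cW < 1"
    and \<beta>: "0 < \<beta>l" "\<beta>l \<le> \<beta>u"
    and M: "\<forall>H. transpose (M H) = M H"
      "\<forall>H v. \<beta>l * (v \<bullet> v) \<le> v \<bullet> (M H *v v) \<and> v \<bullet> (M H *v v) \<le> \<beta>u * (v \<bullet> v)"
    and \<epsilon>5: "\<epsilon>5 > 0" and e\<alpha>0: "e\<alpha>0 > 0"
    and part0: "\<forall>c. is_partition T (part0 c)"
    and run0: "s 0 = (part0, \<alpha>0, e\<alpha>0, d_in)"
    and run: "\<forall>n. ls_step Obj mu P D d0 \<psi> \<gamma> cW newton M \<theta> (s n) (sub n) (s (Suc n))"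
    and inf_sub: "\<exists>\<^sub>\<infinity>n. sub n"
  shows "\<not> bdd_above (range (\<lambda>n. hybrid_pen \<epsilon>5 P D d0 (fst (s n)) \<theta>))
         \<or> unsafe \<psi> D d0 part0 \<theta>"
proof (rule disjI2, rule ccontr)
  assume safe: "\<not> unsafe \<psi> D d0 part0 \<theta>"
  have lip: "\<And>c t1 t2. t1 \<in> {0..T} \<Longrightarrow> t2 \<in> {0..T} \<Longrightarrow>
      \<bar>D c t1 \<theta> - D c t2 \<theta>\<bar> \<le> L1 * \<bar>t1 - t2\<bar>"
    using L1 by blast
  have "0 \<le> L1 * T" using order_trans[OF abs_ge_zero lip[of 0 T]] T by simp
  then have "0 \<le> L1" using T by (simp add: zero_le_mult_iff)
  obtain m \<rho> where "m > 0" "\<rho> > 0"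
    and clearance: "\<And>Q c ab. is_refinement Q part0 \<Longrightarrow> ab \<in> Q c \<Longrightarrow>
      (fst ab + snd ab) / 2 \<in> {0..T} \<and> m \<le> D c ((fst ab + snd ab) / 2) \<theta> - d0"
    and safe_near: "\<And>Q y. is_refinement Q part0 \<Longrightarrow> dist y \<theta> < \<rho> \<Longrightarrow> \<not> unsafe \<psi> D d0 Q y"
    using safe_ball_for_refinements[OF part0[rule_format] safe \<psi>_def[THEN meta_eq_to_obj_eq]
        \<open>0 \<le> L1\<close> L2[THEN less_imp_le] \<eta> lip C2_imp_continuous] A1 by metis
  have "Obj differentiable (at \<theta>)"
    using Obj unfolding twice_diff_def differentiable_def by blast
  then obtain Kg where "\<forall>Q. is_refinement Q part0 \<longrightarrow> norm (grad (energy Obj mu P D d0 Q) \<theta>) \<le> Kg"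
    using grad_energy_bounded_on_refinements[where D = D and p = part0 and mu = mu,
        OF A1[rule_format] A3(1) _ \<open>m > 0\<close>] clearance by blast
  then have direction_bounded:
    "norm (direction newton M (energy Obj mu P D d0 Q) \<theta>) \<le> max Kg (Kg / \<beta>l)"
    if "is_refinement Q part0" for Q
    using norm_direction_le[OF _ \<beta>(1)] M(2) that by blast
  interpret line_search_run Obj mu P D d0 \<psi> \<gamma> cW newton M \<theta> part0 s sub
    using \<gamma> run0 \<alpha>0 e\<alpha>0 run inf_sub is_refinement_self[OF part0[rule_format]]
    by unfold_locales auto
  obtain Q y where "is_refinement Q part0" "dist y \<theta> < \<rho>" "unsafe \<psi> D d0 Q y"
    using unsafe_trial_point_near[OF direction_bounded \<open>\<rho> > 0\<close>] by blast
  with safe_near show False by blast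
qed

end
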